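(* Let $\mathcal{D}(\rho)=p_0\rho+p_1X\rho X+p_2Y\rho Y+p_3Z\rho Z$ and $\mathcal{E}(\rho)=q_0\rho+q_1X\rho X+q_2Y\rho Y+q_3Z\rho Z$ be two arbitrary single-qubit quantum Pauli channels, where $(p_i)$ and $(q_i)$ are probability vectors. The entanglement-assisted classical communication capacity of $\mathcal{D}$ and $\mathcal{E}$ over a quantum trajectory is $$C_{\text{E,Q}}=2+H(\alpha)+A_0\log_2A_0+\sum_{k=1}^3 A_k^+\log_2A_k^++\sum_{k=1}^3A_k^-\log_2A_k^-,$$ where $A_0=p_0q_0+p_1q_1+p_2q_2+p_3q_3$, $A_1^+=p_0q_1+p_1q_0$, $A_2^+=p_0q_2+p_2q_0$, $A_3^+=p_0q_3+p_3q_0$, $A_1^-=p_2q_3+p_3q_2$, $A_2^-=p_3q_1+p_1q_3$, $A_3^-=p_1q_2+p_2q_1$, $\alpha=A_0+A_1^++A_2^++A_3^+$, and $H(\alpha)=-\alpha\log_2\alpha-(1-\alpha)\log_2(1-\alpha)$ is the binary entropy.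
   Context: $X,Y,Z$ are the Pauli matrices, $\sigma_0=I,\sigma_1=X,\sigma_2=Y,\sigma_3=Z$, $|\pm\rangle=(|0\rangle\pm|1\rangle)/\sqrt2$, and $0\log_2 0=0$. For a Pauli channel $\mathcal{N}(\rho)=\sum_{i=0}^3 r_i\sigma_i\rho\sigma_i$, its entanglement-assisted classical capacity (superdense-coding capacity with a pre-shared EPR pair, equiprobable inputs) is defined as $C_E(\mathcal{N})=2+\sum_i r_i\log_2 r_i$. Quantum trajectory (quantum switch): with $D_i=\sqrt{p_i}\sigma_i$, $E_j=\sqrt{q_j}\sigma_j$, the channel acting on the data qubit $\rho$ and a control qubit $\omega=|+\rangle\langle+|$ is $\mathcal{S}_\omega(\mathcal{D},\mathcal{E})(\rho)=\sum_{i,j}W_{i,j}(\rho\otimes\omega)W_{i,j}^\dagger$ with $W_{i,j}=E_jD_i\otimes|0\rangle\langle0|+D_iE_j\otimes|1\rangle\langle1|$. Since each pair of Pauli matrices commutes or anticommutes, the output is of the form $p_{+}\,\mathcal{S}_{+}(\rho)\otimes|+\rangle\langle+|+p_{-}\,\mathcal{S}_{-}(\rho)\otimes|-\rangle\langle-|$, where the pairs $(i,j)$ with commuting $\sigma_i,\sigma_j$ contribute to the $|+\rangle$ branch and anticommuting pairs to the $|-\rangle$ branch, $p_\pm$ are the total weights of the branches and $\mathcal{S}_\pm$ are the normalized (Pauli) channels of each branch. Measuring the control in the basis $\{|+\rangle,|-\rangle\}$, the capacity over the quantum trajectory is defined as $C_{\text{E,Q}}=p_{+}C_E(\mathcal{S}_{+})+p_{-}C_E(\mathcal{S}_{-})$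 (a branch with zero probability contributes zero). *)

theory Defs
  imports "HOL-Analysis.Analysis"
begin

text \<open>Single-qubit operators are 2x2 complex matrices, type complex^2^2 (indices 0,1 of type 2).\<close>

type_synonym qop = "complex^2^2"

definition pauli :: "nat \<Rightarrow> qop" where
  "pauli k =
     (if k = 0 then mat 1
      else if k = 1 then (\<chi> r c. if r = c then 0 else 1)
      else if k = 2 then (\<chi> r c. if r = c then 0 else if r = 0 then - \<i> else \<i>)
      else if k = 3 then (\<chi> r c. if r \<noteq> c then 0 else if r = 0 then 1 else -1)
      else 0)"

definition cadj :: "qop \<Rightarrow> qop" where
  "cadj A = (\<chi> i j. cnj (A $ j $ i))"

definition pauli_commute :: "nat \<Rightarrow> nat \<Rightarrow> bool" where
  "pauli_commute i j \<longleftrightarrow> pauli i ** pauli j = pauli j ** pauli i"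

definition pauli_channel :: "(nat \<Rightarrow> real) \<Rightarrow> qop \<Rightarrow> qop" where
  "pauli_channel r \<rho> = (\<Sum>k<4. r k *\<^sub>R (pauli k ** \<rho> ** pauli k))"

definition is_pauli_coeffs :: "(nat \<Rightarrow> real) \<Rightarrow> (qop \<Rightarrow> qop) \<Rightarrow> bool" where
  "is_pauli_coeffs r N \<longleftrightarrow> (\<forall>k<4. 0 \<le> r k) \<and> (\<forall>k\<ge>4. r k = 0) \<and> (\<Sum>k<4. r k) = 1
      \<and> (\<forall>\<rho>. N \<rho> = pauli_channel r \<rho>)"

definition plogp :: "real \<Rightarrow> real" where
  "plogp x = (if x = 0 then 0 else x * log 2 x)"

definition C_E :: "(qop \<Rightarrow> qop) \<Rightarrow> real" where
  "C_E N = (let r = (THE r. is_pauli_coeffs r N) in 2 + (\<Sum>k<4. plogp (r k)))"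

text \<open>Unnormalised branch of the quantum switch output (b = True: commuting pairs, control
  branch |+>; b = False: anticommuting pairs, control branch |->). The Kraus operator
  contributing to the data part is E_j D_i = sqrt(p_i q_j) sigma_j sigma_i.\<close>
definition switch_branch :: "bool \<Rightarrow> (nat \<Rightarrow> real) \<Rightarrow> (nat \<Rightarrow> real) \<Rightarrow> qop \<Rightarrow> qop" where
  "switch_branch b p q \<rho> =
     (\<Sum>i<4. \<Sum>j<4. if pauli_commute i j = b then
        (let K = (sqrt (p i) * sqrt (q j)) *\<^sub>R (pauli j ** pauli i) in K ** \<rho> ** cadj K)
      else 0)"

definition branch_prob :: "bool \<Rightarrow> (nat \<Rightarrow> real) \<Rightarrow> (nat \<Rightarrow> real) \<Rightarrow> real" where
  "branch_prob b p q = (\<Sum>i<4. \<Sum>j<4. if pauli_commute i j = b then p i * q j else 0)"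

definition C_EQ :: "(nat \<Rightarrow> real) \<Rightarrow> (nat \<Rightarrow> real) \<Rightarrow> real" where
  "C_EQ p q = (\<Sum>b\<in>{True, False}.
      if branch_prob b p q = 0 then 0
      else branch_prob b p q * C_E (\<lambda>\<rho>. (1 / branch_prob b p q) *\<^sub>R switch_branch b p q \<rho>))"

definition bin_entropy :: "real \<Rightarrow> real" where
  "bin_entropy a = - plogp a - plogp (1 - a)"

end

theory Submission
  imports Defs
begin

text \<open>
  Up to a phase, \<sigma>_j \<sigma>_i is the Pauli matrix \<sigma>_(i xor j), the xor being taken bitwise on the
  indices, and the phase cancels under conjugation. Hence each branch of the switch is itself,
  up to normalisation, a Pauli channel whose coefficient of \<sigma>_k collects the products p_i q_j
  with i xor j = k over the commuting, resp. anticommuting, pairs: these are A_k^+ and A_k^-.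
  Pauli coefficients are determined by the channel, so the capacity of a branch of weight a is
  2 + \<Sum> (A_k/a) log (A_k/a), and the grouping rule
  a \<Sum> (A_k/a) log (A_k/a) = \<Sum> A_k log A_k - a log a, together with p_+ + p_- = 1,
  produces the binary entropy of \<alpha> = p_+.
\<close>

lemma sum_lessThan_4: "(\<Sum>k<4. f k) = f 0 + f 1 + f 2 + (f (3::nat) :: 'a::comm_monoid_add)"
  by (simp add: eval_nat_numeral)

lemma less_4_cases: "(k::nat) < 4 \<longleftrightarrow> k = 0 \<or> k = 1 \<or> k = 2 \<or> k = 3"
  by (auto simp: eval_nat_numeral less_Suc_eq)

lemma sum_swap3:
  "(\<Sum>i\<in>I. \<Sum>j\<in>J. \<Sum>k\<in>K. f i j k) = (\<Sum>k\<in>K. \<Sum>i\<in>I. \<Sum>j\<in>J. (f i j k :: 'a::comm_monoid_add))"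
  by (subst sum.swap) (simp add: sum.swap[of _ J])

lemma plogp_0 [simp]: "plogp 0 = 0"
  by (simp add: plogp_def)

lemma plogp_divide:
  assumes "0 \<le> x" and "0 < a"
  shows "a * plogp (x / a) = plogp x - x * log 2 a"
  using assms by (auto simp: plogp_def log_divide field_simps)

lemma sum_plogp_divide:
  fixes r :: "'i \<Rightarrow> real"
  assumes "\<forall>k\<in>I. 0 \<le> r k" and "(\<Sum>k\<in>I. r k) = a" and "0 < a"
  shows "a * (\<Sum>k\<in>I. plogp (r k / a)) = (\<Sum>k\<in>I. plogp (r k)) - plogp a"
proof -
  have "a * (\<Sum>k\<in>I. plogp (r k / a)) = (\<Sum>k\<in>I. plogp (r k) - r k * log 2 a)"
    unfolding sum_distrib_left using assms by (intro sum.cong) (auto simp: plogp_divide)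
  also have "\<dots> = (\<Sum>k\<in>I. plogp (r k)) - a * log 2 a"
    by (simp add: sum_subtractf assms(2)[symmetric] sum_distrib_right)
  finally show ?thesis
    using assms(3) by (simp add: plogp_def)
qed

lemma qop_eq_iff:
  "(A::qop) = B \<longleftrightarrow> A$1$1 = B$1$1 \<and> A$1$2 = B$1$2 \<and> A$2$1 = B$2$1 \<and> A$2$2 = B$2$2"
  by (auto simp: vec_eq_iff forall_2)

lemmas qop_entries = matrix_matrix_mult_def sum_2 pauli_def mat_def cadj_def

lemma xor_less_4: "i < 4 \<Longrightarrow> j < 4 \<Longrightarrow> Bit_Operations.xor i j < (4::nat)"
  by (auto simp: less_4_cases)

lemma pauli_commute_iff:
  "i < 4 \<Longrightarrow> j < 4 \<Longrightarrow> pauli_commute i j \<longleftrightarrow> i = 0 \<or> j = 0 \<or> i = j"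
  unfolding pauli_commute_def less_4_cases
  by (elim disjE; simp add: qop_eq_iff qop_entries)

lemma pauli_mult_conj:
  "i < 4 \<Longrightarrow> j < 4 \<Longrightarrow>
    (pauli j ** pauli i) ** \<rho> ** cadj (pauli j ** pauli i)
      = pauli (Bit_Operations.xor i j) ** \<rho> ** pauli (Bit_Operations.xor i j)"
  unfolding less_4_cases
  by (elim disjE; simp add: qop_eq_iff qop_entries algebra_simps)

lemma scaleR_conj: "((c::real) *\<^sub>R M) ** \<rho> ** cadj (c *\<^sub>R M) = (c * c) *\<^sub>R (M ** \<rho> ** cadj M)"
  by (simp add: qop_eq_iff matrix_matrix_mult_def sum_2 cadj_def)
    (simp add: scaleR_conv_of_real algebra_simps)

lemma sum_xor_delta:
  fixes i j :: nat
  assumes "i < 4" "j < 4"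
  shows "(\<Sum>k<4. if P \<and> Bit_Operations.xor i j = k then f k else 0)
    = (if P then f (Bit_Operations.xor i j) else (0 :: 'a::comm_monoid_add))"
  using xor_less_4[OF assms] by (cases P) (simp_all add: sum.delta)

definition switch_coeff :: "bool \<Rightarrow> (nat \<Rightarrow> real) \<Rightarrow> (nat \<Rightarrow> real) \<Rightarrow> nat \<Rightarrow> real" where
  "switch_coeff b p q k =
     (\<Sum>i<4. \<Sum>j<4. if pauli_commute i j = b \<and> Bit_Operations.xor i j = k then p i * q j else 0)"

lemma switch_coeff_nonneg:
  "\<forall>k<4. 0 \<le> p k \<Longrightarrow> \<forall>k<4. 0 \<le> q k \<Longrightarrow> 0 \<le> switch_coeff b p q k"
  unfolding switch_coeff_def by (intro sum_nonneg) auto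

lemma switch_coeff_eq_0: "4 \<le> k \<Longrightarrow> switch_coeff b p q k = 0"
  unfolding switch_coeff_def by (intro sum.neutral ballI) (auto dest: xor_less_4)

lemma switch_coeff_values:
  "switch_coeff True p q 0 = p 0 * q 0 + p 1 * q 1 + p 2 * q 2 + p 3 * q 3"
  "switch_coeff True p q 1 = p 0 * q 1 + p 1 * q 0"
  "switch_coeff True p q 2 = p 0 * q 2 + p 2 * q 0"
  "switch_coeff True p q 3 = p 0 * q 3 + p 3 * q 0"
  "switch_coeff False p q 0 = 0"
  "switch_coeff False p q 1 = p 2 * q 3 + p 3 * q 2"
  "switch_coeff False p q 2 = p 3 * q 1 + p 1 * q 3"
  "switch_coeff False p q 3 = p 1 * q 2 + p 2 * q 1"
  by (simp_all add: switch_coeff_def sum_lessThan_4 pauli_commute_iff)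

lemma branch_prob_eq_sum_switch_coeff: "branch_prob b p q = (\<Sum>k<4. switch_coeff b p q k)"
proof -
  have "branch_prob b p q = (\<Sum>i<4. \<Sum>j<4. \<Sum>k<4.
      if pauli_commute i j = b \<and> Bit_Operations.xor i j = k then p i * q j else 0)"
    unfolding branch_prob_def
    by (intro sum.cong refl) (rule sum_xor_delta[symmetric]; simp)
  then show ?thesis by (subst (asm) sum_swap3) (simp add: switch_coeff_def)
qed

lemma branch_prob_True_add_False:
  "branch_prob True p q + branch_prob False p q = (\<Sum>i<4. p i) * (\<Sum>j<4. q j)"
  unfolding branch_prob_def sum.distrib[symmetric] sum_product by (intro sum.cong) auto

lemma switch_branch_eq_pauli_channel:
  assumes "\<forall>k<4. 0 \<le> p k" and "\<forall>k<4. 0 \<le> q k"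
  shows "switch_branch b p q \<rho> = pauli_channel (switch_coeff b p q) \<rho>"
proof -
  let ?conj = "\<lambda>k. pauli k ** \<rho> ** pauli k"
  have "switch_branch b p q \<rho> =
      (\<Sum>i<4. \<Sum>j<4. if pauli_commute i j = b then (p i * q j) *\<^sub>R ?conj (Bit_Operations.xor i j) else 0)"
    unfolding switch_branch_def Let_def
  proof (intro sum.cong refl)
    fix i j :: nat assume "i \<in> {..<4}" "j \<in> {..<4}"
    moreover have "sqrt (p i) * sqrt (q j) * (sqrt (p i) * sqrt (q j)) = p i * q j"
      using assms calculation by (simp add: real_sqrt_mult[symmetric])
    ultimately show "(if pauli_commute i j = b
        then (sqrt (p i) * sqrt (q j)) *\<^sub>R (pauli j ** pauli i) ** \<rho> **
             cadj ((sqrt (p i) * sqrt (q j)) *\<^sub>R (pauli j ** pauli i)) else 0)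
      = (if pauli_commute i j = b then (p i * q j) *\<^sub>R ?conj (Bit_Operations.xor i j) else 0)"
      by (simp add: scaleR_conj pauli_mult_conj)
  qed
  also have "\<dots> = (\<Sum>i<4. \<Sum>j<4. \<Sum>k<4.
      if pauli_commute i j = b \<and> Bit_Operations.xor i j = k then (p i * q j) *\<^sub>R ?conj k else 0)"
    by (intro sum.cong refl) (rule sum_xor_delta[symmetric]; simp)
  also have "\<dots> = (\<Sum>k<4. switch_coeff b p q k *\<^sub>R ?conj k)"
    unfolding switch_coeff_def scaleR_sum_left by (subst sum_swap3) (intro sum.cong refl; simp)
  finally show ?thesis unfolding pauli_channel_def .
qed

lemma pauli_coeffs_unique:
  assumes "is_pauli_coeffs r N" and "is_pauli_coeffs s N"
  shows "r = s"
proof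
  txt \<open>The images of the matrix units E11 and E12 determine r_0 \<plusminus> r_3 and r_1 \<plusminus> r_2.\<close>
  define E11 :: qop where "E11 = (\<chi> i j. if i = 1 \<and> j = 1 then 1 else 0)"
  define E12 :: qop where "E12 = (\<chi> i j. if i = 1 \<and> j = 2 then 1 else 0)"
  have "pauli_channel r E11 = pauli_channel s E11" and "pauli_channel r E12 = pauli_channel s E12"
    using assms unfolding is_pauli_coeffs_def by metis+
  then have "r 0 + r 3 = s 0 + s 3" "r 1 + r 2 = s 1 + s 2"
    and "r 0 - r 3 = s 0 - s 3" "r 1 - r 2 = s 1 - s 2"
    unfolding pauli_channel_def sum_lessThan_4 qop_eq_iff E11_def E12_def
    by (simp_all add: qop_entries; simp add: scaleR_conv_of_real complex_eq_iff)+
  moreover have "\<forall>k\<ge>4. r k = s k"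
    using assms unfolding is_pauli_coeffs_def by auto
  ultimately show "r k = s k" for k
    by (cases "k < 4") (auto simp: less_4_cases)
qed

lemma C_E_eqI: "is_pauli_coeffs r N \<Longrightarrow> C_E N = 2 + (\<Sum>k<4. plogp (r k))"
  unfolding C_E_def Let_def using the_equality pauli_coeffs_unique by metis

lemma pauli_channel_divide: "pauli_channel (\<lambda>k. r k / a) \<rho> = (1 / a) *\<^sub>R pauli_channel r \<rho>"
  unfolding pauli_channel_def scaleR_sum_right by (simp add: divide_inverse mult.commute)

lemma weighted_C_E_pauli_channel:
  assumes nonneg: "\<forall>k<4. 0 \<le> r k" and supp: "\<forall>k\<ge>4. r k = 0" and sum: "(\<Sum>k<4. r k) = a"
  shows "(if a = 0 then 0 else a * C_E (\<lambda>\<rho>. (1 / a) *\<^sub>R pauli_channel r \<rho>))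
    = 2 * a + (\<Sum>k<4. plogp (r k)) - plogp a"
proof (cases "a = 0")
  case True
  then have "\<forall>k\<in>{..<4}. r k = 0"
    using nonneg sum by (subst sum_nonneg_eq_0_iff[symmetric]) auto
  with True show ?thesis by simp
next
  case False
  with nonneg sum have "0 < a"
    by (metis lessThan_iff order_le_less sum_nonneg)
  moreover have "is_pauli_coeffs (\<lambda>k. r k / a) (\<lambda>\<rho>. (1 / a) *\<^sub>R pauli_channel r \<rho>)"
    unfolding is_pauli_coeffs_def pauli_channel_divide
    using nonneg supp sum False \<open>0 < a\<close> by (simp add: sum_divide_distrib[symmetric])
  ultimately show ?thesis
    using False nonneg sum by (simp add: C_E_eqI distrib_left sum_plogp_divide)
qed

theorem proposition2:
  fixes p q :: "nat \<Rightarrow> real"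
  assumes "\<forall>k<4. 0 \<le> p k" and "(\<Sum>k<4. p k) = 1"
      and "\<forall>k<4. 0 \<le> q k" and "(\<Sum>k<4. q k) = 1"
  shows "C_EQ p q =
    (let A0 = p 0 * q 0 + p 1 * q 1 + p 2 * q 2 + p 3 * q 3;
         A1p = p 0 * q 1 + p 1 * q 0; A2p = p 0 * q 2 + p 2 * q 0; A3p = p 0 * q 3 + p 3 * q 0;
         A1m = p 2 * q 3 + p 3 * q 2; A2m = p 3 * q 1 + p 1 * q 3; A3m = p 1 * q 2 + p 2 * q 1;
         \<alpha> = A0 + A1p + A2p + A3p
     in 2 + bin_entropy \<alpha> + plogp A0 + plogp A1p + plogp A2p + plogp A3p
          + plogp A1m + plogp A2m + plogp A3m)"
proof -
  have branch: "(if branch_prob b p q = 0 then 0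
      else branch_prob b p q * C_E (\<lambda>\<rho>. (1 / branch_prob b p q) *\<^sub>R switch_branch b p q \<rho>))
    = 2 * branch_prob b p q + (\<Sum>k<4. plogp (switch_coeff b p q k)) - plogp (branch_prob b p q)"
    for b
    unfolding switch_branch_eq_pauli_channel[OF assms(1,3)] branch_prob_eq_sum_switch_coeff
    by (rule weighted_C_E_pauli_channel) (simp_all add: assms switch_coeff_nonneg switch_coeff_eq_0)
  have prob_False: "branch_prob False p q = 1 - branch_prob True p q"
    using branch_prob_True_add_False[of p q] assms(2,4) by simp
  have capacity: "C_EQ p q = 2 + bin_entropy (branch_prob True p q)
      + (\<Sum>k<4. plogp (switch_coeff True p q k)) + (\<Sum>k<4. plogp (switch_coeff False p q k))"
    by (simp add: C_EQ_def branch bin_entropy_def prob_False)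
  show ?thesis
    unfolding capacity branch_prob_eq_sum_switch_coeff sum_lessThan_4 switch_coeff_values Let_def
    by (simp add: algebra_simps)
qed

end
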